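(* (Uniqueness of types.) In objective type theory (defined in the context below), if $\Gamma \vdash a \in \sigma$ and $\Gamma \vdash a \in \tau$ are both derivable, then $\sigma \equiv \tau$ (syntactic equality up to $\alpha$-equivalence).
   Context: Objective type theory is the following formal system. It has three judgement forms: $\vdash \Gamma\ \mathrm{Ctxt}$, $\Gamma \vdash \sigma \in \mathrm{Type}$, $\Gamma \vdash a \in \sigma$, where a context is a list $[x_1 \in \sigma_1, \ldots, x_n \in \sigma_n]$ of distinct variables with types. Expressions are considered up to $\alpha$-equivalence (e.g. via de Bruijn indices), and $\equiv$ denotes this syntactic equality; $[t/x]$ denotes capture-avoiding substitution and $[x_1,\ldots,x_n]t$ denotes binding of the $x_i$ in $t$. There is NO definitional (judgemental) equality and no conversion rule. The rules are exactly: $\vdash []\ \mathrm{Ctxt}$; from $\vdash \Gamma\ \mathrm{Ctxt}$, $\Gamma \vdash \sigma \in \mathrm{Type}$ and $x$ fresh infer $\vdash [\Gamma, x \in \sigma]\ \mathrm{Ctxt}$; from $\vdash [\Gamma, x\in\sigma, \Delta]\ \mathrm{Ctxt}$ infer $\Gamma, x \in \sigma, \Delta \vdash x \in \sigma$. $\Pi$-types: from $\Gamma \vdash A \in \mathrm{Type}$ and $\Gamma, x\in A \vdash B \in \mathrm{Type}$ infer $\Gamma \vdash \Pi(A,[x]B) \in \mathrm{Type}$; from $\Gamma, x \in A \vdash t \in B$ infer $\Gamma \vdash \lambda(A,[x]B,[x]t) \in \Pi(A,[x]B)$; from $\Gamma \vdash f \in \Pi(A,[x]B)$ and $\Gamma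 \vdash a \in A$ infer $\Gamma \vdash \mathbf{app}(A,[x]B,f,a) \in B[a/x]$; from $\Gamma, x\in A \vdash t \in B$ and $\Gamma \vdash a \in A$ infer $\Gamma \vdash \mathbf{betaconv}(A,[x]B,a,[x]t) \in \mathbf{app}(A,[x]B,\lambda(A,[x]B,[x]t),a) =_{B[a/x]} t[a/x]$. Identity types: from $\Gamma \vdash a \in A$ and $\Gamma \vdash b \in A$ infer $\Gamma \vdash a =_A b \in \mathrm{Type}$; from $\Gamma \vdash a \in A$ infer $\Gamma \vdash \mathbf{refl}(A,a) \in a =_A a$; from $\Gamma, x\in A, y \in A, u \in x =_A y \vdash P \in \mathrm{Type}$, $\Gamma \vdash p \in a =_A b$ and $\Gamma, x \in A \vdash d \in P[x,x,\mathbf{refl}(A,x)/x,y,u]$ infer $\Gamma \vdash \mathbf{idrec}(A,[x,y,u]P,a,b,p,[x]d) \in P[a,b,p/x,y,u]$; from $\Gamma, x\in A, y \in A, u \in x =_A y \vdash P \in \mathrm{Type}$, $\Gamma \vdash a \in A$ and $\Gamma, x \in A \vdash d \in P[x,x,\mathbf{refl}(A,x)/x,y,u]$ infer $\Gamma \vdash \mathbf{idconv}(A,[x,y,u]P,a,[x]d) \in \mathbf{idrec}(A,[x,y,u]P,a,a,\mathbf{refl}(A,a),[x]d) =_{P[a,a,\mathbf{refl}(A,a)/x,y,u]} d[a/x]$. *)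

theory Defs
  imports Main
begin

text \<open>Raw syntax of objective type theory with de Bruijn indices (so syntactic
equality of tm is alpha-equivalence). Binding structure:
  Pi A B            : B binds 1 variable
  Lam A B t         : B and t bind 1 variable
  App A B f a       : B binds 1
  Betaconv A B a t  : B and t bind 1
  IdTy A a b        : a =_A b, no binders
  Refl A a          : no binders
  Idrec A P a b p d : P binds 3 (x,y,u; u is index 0), d binds 1
  Idconv A P a d    : P binds 3, d binds 1\<close>

datatype tm =
    Var nat
  | Pi tm tm
  | Lam tm tm tm
  | App tm tm tm tm
  | Betaconv tm tm tm tm
  | IdTy tm tm tm
  | Refl tm tm
  | Idrec tm tm tm tm tm tm
  | Idconv tm tm tm tm

definition upr :: "(nat \<Rightarrow> nat) \<Rightarrow> nat \<Rightarrow> nat" where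
  "upr \<rho> i = (case i of 0 \<Rightarrow> 0 | Suc j \<Rightarrow> Suc (\<rho> j))"

primrec ren :: "(nat \<Rightarrow> nat) \<Rightarrow> tm \<Rightarrow> tm" where
  "ren \<rho> (Var i) = Var (\<rho> i)"
| "ren \<rho> (Pi A B) = Pi (ren \<rho> A) (ren (upr \<rho>) B)"
| "ren \<rho> (Lam A B t) = Lam (ren \<rho> A) (ren (upr \<rho>) B) (ren (upr \<rho>) t)"
| "ren \<rho> (App A B f a) = App (ren \<rho> A) (ren (upr \<rho>) B) (ren \<rho> f) (ren \<rho> a)"
| "ren \<rho> (Betaconv A B a t) =
     Betaconv (ren \<rho> A) (ren (upr \<rho>) B) (ren \<rho> a) (ren (upr \<rho>) t)"
| "ren \<rho> (IdTy A a b) = IdTy (ren \<rho> A) (ren \<rho> a) (ren \<rho> b)"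
| "ren \<rho> (Refl A a) = Refl (ren \<rho> A) (ren \<rho> a)"
| "ren \<rho> (Idrec A P a b p d) =
     Idrec (ren \<rho> A) (ren (upr (upr (upr \<rho>))) P) (ren \<rho> a) (ren \<rho> b) (ren \<rho> p)
       (ren (upr \<rho>) d)"
| "ren \<rho> (Idconv A P a d) =
     Idconv (ren \<rho> A) (ren (upr (upr (upr \<rho>))) P) (ren \<rho> a) (ren (upr \<rho>) d)"

definition ups :: "(nat \<Rightarrow> tm) \<Rightarrow> nat \<Rightarrow> tm" where
  "ups \<sigma> i = (case i of 0 \<Rightarrow> Var 0 | Suc j \<Rightarrow> ren Suc (\<sigma> j))"

primrec subst :: "(nat \<Rightarrow> tm) \<Rightarrow> tm \<Rightarrow> tm" where
  "subst \<sigma> (Var i) = \<sigma> i"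
| "subst \<sigma> (Pi A B) = Pi (subst \<sigma> A) (subst (ups \<sigma>) B)"
| "subst \<sigma> (Lam A B t) = Lam (subst \<sigma> A) (subst (ups \<sigma>) B) (subst (ups \<sigma>) t)"
| "subst \<sigma> (App A B f a) = App (subst \<sigma> A) (subst (ups \<sigma>) B) (subst \<sigma> f) (subst \<sigma> a)"
| "subst \<sigma> (Betaconv A B a t) =
     Betaconv (subst \<sigma> A) (subst (ups \<sigma>) B) (subst \<sigma> a) (subst (ups \<sigma>) t)"
| "subst \<sigma> (IdTy A a b) = IdTy (subst \<sigma> A) (subst \<sigma> a) (subst \<sigma> b)"
| "subst \<sigma> (Refl A a) = Refl (subst \<sigma> A) (subst \<sigma> a)"
| "subst \<sigma> (Idrec A P a b p d) =
     Idrec (subst \<sigma> A) (subst (ups (ups (ups \<sigma>))) P) (subst \<sigma> a) (subst \<sigma> b)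
       (subst \<sigma> p) (subst (ups \<sigma>) d)"
| "subst \<sigma> (Idconv A P a d) =
     Idconv (subst \<sigma> A) (subst (ups (ups (ups \<sigma>))) P) (subst \<sigma> a) (subst (ups \<sigma>) d)"

definition scons :: "tm \<Rightarrow> (nat \<Rightarrow> tm) \<Rightarrow> nat \<Rightarrow> tm" where
  "scons a \<sigma> i = (case i of 0 \<Rightarrow> a | Suc j \<Rightarrow> \<sigma> j)"

definition inst1 :: "tm \<Rightarrow> tm \<Rightarrow> tm" where
  "inst1 B a = subst (scons a Var) B"

text \<open>P[a,b,p/x,y,u] for P under binders x,y,u (u innermost).\<close>
definition inst3 :: "tm \<Rightarrow> tm \<Rightarrow> tm \<Rightarrow> tm \<Rightarrow> tm" where
  "inst3 P a b p = subst (scons p (scons b (scons a Var))) P"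

text \<open>P[x,x,refl(A,x)/x,y,u], living in context extended by x : A.\<close>
definition instd :: "tm \<Rightarrow> tm \<Rightarrow> tm" where
  "instd A P = subst (scons (Refl (ren Suc A) (Var 0))
                       (scons (Var 0) (scons (Var 0) (\<lambda>k. Var (Suc k))))) P"

text \<open>Contexts: lists of types, head = most recently added variable (index 0).
The context for the motive: Gamma, x : A, y : A, u : x =_A y.\<close>
definition motive_ctx :: "tm list \<Rightarrow> tm \<Rightarrow> tm list" where
  "motive_ctx \<Gamma> A = IdTy (ren (\<lambda>i. i + 2) A) (Var 1) (Var 0) # ren Suc A # A # \<Gamma>"

inductive ctxt :: "tm list \<Rightarrow> bool"
  and is_type :: "tm list \<Rightarrow> tm \<Rightarrow> bool"
  and has_type :: "tm list \<Rightarrow> tm \<Rightarrow> tm \<Rightarrow> bool"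
where
  ctxt_nil: "ctxt []"
| ctxt_cons: "ctxt \<Gamma> \<Longrightarrow> is_type \<Gamma> \<sigma> \<Longrightarrow> ctxt (\<sigma> # \<Gamma>)"
| var: "ctxt \<Gamma> \<Longrightarrow> i < length \<Gamma> \<Longrightarrow> has_type \<Gamma> (Var i) (ren (\<lambda>k. k + Suc i) (\<Gamma> ! i))"
| pi_form: "is_type \<Gamma> A \<Longrightarrow> is_type (A # \<Gamma>) B \<Longrightarrow> is_type \<Gamma> (Pi A B)"
| pi_intro: "has_type (A # \<Gamma>) t B \<Longrightarrow> has_type \<Gamma> (Lam A B t) (Pi A B)"
| pi_elim: "has_type \<Gamma> f (Pi A B) \<Longrightarrow> has_type \<Gamma> a A \<Longrightarrow>
            has_type \<Gamma> (App A B f a) (inst1 B a)"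
| betaconv: "has_type (A # \<Gamma>) t B \<Longrightarrow> has_type \<Gamma> a A \<Longrightarrow>
            has_type \<Gamma> (Betaconv A B a t)
              (IdTy (inst1 B a) (App A B (Lam A B t) a) (inst1 t a))"
| id_form: "has_type \<Gamma> a A \<Longrightarrow> has_type \<Gamma> b A \<Longrightarrow> is_type \<Gamma> (IdTy A a b)"
| refl: "has_type \<Gamma> a A \<Longrightarrow> has_type \<Gamma> (Refl A a) (IdTy A a a)"
| idrec: "is_type (motive_ctx \<Gamma> A) P \<Longrightarrow> has_type \<Gamma> p (IdTy A a b) \<Longrightarrow>
          has_type (A # \<Gamma>) d (instd A P) \<Longrightarrow>
          has_type \<Gamma> (Idrec A P a b p d) (inst3 P a b p)"
| idconv: "is_type (motive_ctx \<Gamma> A) P \<Longrightarrow> has_type \<Gamma> a A \<Longrightarrow>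
          has_type (A # \<Gamma>) d (instd A P) \<Longrightarrow>
          has_type \<Gamma> (Idconv A P a d)
            (IdTy (inst3 P a a (Refl A a)) (Idrec A P a a (Refl A a) d) (inst1 d a))"

end

theory Submission
  imports Defs
begin

text \<open>Each term former is introduced by exactly one typing rule, its annotations
determine the type of the conclusion, and there is no conversion rule. Hence the
type of a term is computed from the term and the context alone.\<close>

primrec synth_type :: "tm list \<Rightarrow> tm \<Rightarrow> tm option" where
  "synth_type \<Gamma> (Var i) =
     (if i < length \<Gamma> then Some (ren (\<lambda>k. k + Suc i) (\<Gamma> ! i)) else None)"
| "synth_type \<Gamma> (Pi A B) = None"
| "synth_type \<Gamma> (Lam A B t) = Some (Pi A B)"
| "synth_type \<Gamma> (App A B f a) = Some (inst1 B a)"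
| "synth_type \<Gamma> (Betaconv A B a t) =
     Some (IdTy (inst1 B a) (App A B (Lam A B t) a) (inst1 t a))"
| "synth_type \<Gamma> (IdTy A a b) = None"
| "synth_type \<Gamma> (Refl A a) = Some (IdTy A a a)"
| "synth_type \<Gamma> (Idrec A P a b p d) = Some (inst3 P a b p)"
| "synth_type \<Gamma> (Idconv A P a d) =
     Some (IdTy (inst3 P a a (Refl A a)) (Idrec A P a a (Refl A a) d) (inst1 d a))"

lemma has_type_synth_type:
  assumes "has_type \<Gamma> a \<sigma>"
  shows "synth_type \<Gamma> a = Some \<sigma>"
  using assms by (cases rule: has_type.cases) simp_all

theorem lemma2p5:
  assumes "has_type \<Gamma> a \<sigma>" and "has_type \<Gamma> a \<tau>"
  shows "\<sigma> = \<tau>"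
  using has_type_synth_type[OF assms(1)] has_type_synth_type[OF assms(2)] by simp

end
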